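(* Assume that for every $y\in\mathcal Y$ the map $u\mapsto\ell(y,u)$ is convex and twice continuously differentiable. Then for every $y,z\in\mathcal Y$ and every $\lambda>0$, $$\big\|\hat f_{\lambda;D^y}-\hat f_{\lambda;D^z}\big\|_{\mathcal H}\le\sqrt{K_{n+1,n+1}}\,\frac{\rho^{(1)}_\lambda(y)}{\lambda(n+1)},$$ where $\rho^{(1)}_\lambda(y)=\frac12\big|-\partial_2\ell(z,\hat f_{\lambda;D^z}(X_{n+1}))+\partial_2\ell(y,\hat f_{\lambda;D^z}(X_{n+1}))\big|$.
   Context: Let $\mathcal X\subset\mathbb R^d$, $\mathcal Y\subset\mathbb R$, $D=\{(X_1,Y_1),\dots,(X_n,Y_n)\}$ i.i.d. with distribution $P$ on $\mathcal X\times\mathcal Y$, $(X_{n+1},Y_{n+1})\sim P$ independent. For $y\in\mathcal Y$, $D^y=D\cup\{(X_{n+1},y)\}$. $\mathcal H$ is an RKHS of functions $\mathcal X\to\mathbb R$ with kernel $\kappa_{\mathcal H}$, and $K_{n+1,n+1}=\kappa_{\mathcal H}(X_{n+1},X_{n+1})$. For a loss $\ell:\mathcal Y\times\mathcal Y\to\mathbb R$ and $\lambda>0$, $\hat f_{\lambda;D^y}$ is the minimizer over $f\in\mathcal H$ of $\frac1{n+1}\sum_{(x,y')\in D^y}\ell(y',f(x))+\lambda\|f\|_{\mathcal H}^2$. $\partial_2\ell(y,u)$ denotes the derivative of $u\mapsto\ell(y,u)$. *)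

theory Defs
  imports "HOL-Analysis.Analysis"
begin

text \<open>RKHS model: a real Hilbert space 'h together with the canonical feature map
  (reproducing representers) \<Phi> :: 'x \<Rightarrow> 'h, so that the element f of the space is the
  function x \<mapsto> f \<bullet> \<Phi> x (reproducing property), with kernel
  \<kappa>(x,x') = \<Phi> x \<bullet> \<Phi> x'.\<close>

definition is_rkhs_feature_map :: "('x \<Rightarrow> 'h::{real_inner,complete_space}) \<Rightarrow> bool" where
  "is_rkhs_feature_map \<Phi> \<longleftrightarrow> (\<forall>f g. (\<forall>x. f \<bullet> \<Phi> x = g \<bullet> \<Phi> x) \<longrightarrow> f = g)"

definition rkhs_eval :: "('x \<Rightarrow> 'h::real_inner) \<Rightarrow> 'h \<Rightarrow> 'x \<Rightarrow> real" where
  "rkhs_eval \<Phi> f x = f \<bullet> \<Phi> x"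

definition rkhs_kernel :: "('x \<Rightarrow> 'h::real_inner) \<Rightarrow> 'x \<Rightarrow> 'x \<Rightarrow> real" where
  "rkhs_kernel \<Phi> x x' = \<Phi> x \<bullet> \<Phi> x'"

text \<open>Regularized empirical risk on the augmented data set
  D^y = {(X_0,Y_0),...,(X_{n-1},Y_{n-1})} \<union> {(Xnew, y)} (a multiset of n+1 points).\<close>
definition reg_risk ::
  "(real \<Rightarrow> real \<Rightarrow> real) \<Rightarrow> ('x \<Rightarrow> 'h::real_inner) \<Rightarrow> real \<Rightarrow> nat \<Rightarrow>
   (nat \<Rightarrow> 'x) \<Rightarrow> (nat \<Rightarrow> real) \<Rightarrow> 'x \<Rightarrow> real \<Rightarrow> 'h \<Rightarrow> real" where
  "reg_risk loss \<Phi> lam n X Y Xnew y f =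
     (1 / real (n + 1)) * ((\<Sum>i<n. loss (Y i) (rkhs_eval \<Phi> f (X i))) + loss y (rkhs_eval \<Phi> f Xnew))
     + lam * (norm f)\<^sup>2"

definition is_reg_minimizer ::
  "(real \<Rightarrow> real \<Rightarrow> real) \<Rightarrow> ('x \<Rightarrow> 'h::real_inner) \<Rightarrow> real \<Rightarrow> nat \<Rightarrow>
   (nat \<Rightarrow> 'x) \<Rightarrow> (nat \<Rightarrow> real) \<Rightarrow> 'x \<Rightarrow> real \<Rightarrow> 'h \<Rightarrow> bool" where
  "is_reg_minimizer loss \<Phi> lam n X Y Xnew y f \<longleftrightarrow>
     (\<forall>g. reg_risk loss \<Phi> lam n X Y Xnew y f \<le> reg_risk loss \<Phi> lam n X Y Xnew y g)"

definition C2_real :: "(real \<Rightarrow> real) \<Rightarrow> bool" where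
  "C2_real L \<longleftrightarrow> (\<forall>u. L differentiable (at u)) \<and> (\<forall>u. deriv L differentiable (at u))
                 \<and> continuous_on UNIV (deriv (deriv L))"

end

theory Submission
  imports Defs
begin

text \<open>The regularized risk is strongly convex: since the loss derivatives are monotone, its
  directional derivative is strongly monotone with modulus 2\<lambda>. The first-order conditions at
  the two minimizers differ only in the label of the last data point X. Testing both with
  h = fy - fz gives 2\<lambda> |h|^2 \<le> |\<ell>'(y, fz(X)) - \<ell>'(z, fz(X))| |h(X)| / (n+1), and
  |h(X)| = |h \<bullet> \<Phi> X| \<le> |h| \<surd>K(X,X) by Cauchy-Schwarz.\<close>

lemma rkhs_eval_add [simp]: "rkhs_eval \<Phi> (f + g) x = rkhs_eval \<Phi> f x + rkhs_eval \<Phi> g x"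
  by (simp add: rkhs_eval_def inner_add_left)

lemma rkhs_eval_diff [simp]: "rkhs_eval \<Phi> (f - g) x = rkhs_eval \<Phi> f x - rkhs_eval \<Phi> g x"
  by (simp add: rkhs_eval_def inner_diff_left)

lemma rkhs_eval_scaleR [simp]: "rkhs_eval \<Phi> (c *\<^sub>R f) x = c * rkhs_eval \<Phi> f x"
  by (simp add: rkhs_eval_def)

lemma sqrt_rkhs_kernel_diag: "sqrt (rkhs_kernel \<Phi> x x) = norm (\<Phi> x)"
  by (simp add: rkhs_kernel_def norm_eq_sqrt_inner)

lemma convex_on_deriv_monotone:
  fixes L :: "real \<Rightarrow> real"
  assumes convex: "convex_on UNIV L" and diff: "\<forall>u. L differentiable (at u)"
  shows "0 \<le> (deriv L a - deriv L b) * (a - b)"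
proof -
  have D: "(L has_field_derivative deriv L u) (at u within UNIV)" for u
    using diff DERIV_deriv_iff_real_differentiable by auto
  have "deriv L b * (a - b) \<le> L a - L b" and "deriv L a * (b - a) \<le> L b - L a"
    by (rule convex_on_imp_above_tangent[OF convex]; auto intro: D)+
  then show ?thesis
    by (simp add: algebra_simps)
qed

lemma DERIV_comp_line:
  fixes L :: "real \<Rightarrow> real"
  assumes "L differentiable (at a)"
  shows "((\<lambda>t. L (a + t * b)) has_real_derivative deriv L a * b) (at 0)"
proof -
  have "(L has_real_derivative deriv L (a + 0 * b)) (at (a + 0 * b))"
    using assms DERIV_deriv_iff_real_differentiable by simp
  moreover have "((\<lambda>t. a + t * b) has_real_derivative b) (at 0)"
    by (auto intro!: derivative_eq_intros)
  ultimately show ?thesis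
    using DERIV_chain2 by fastforce
qed

lemma DERIV_power2_norm_line:
  fixes f h :: "'a::real_inner"
  shows "((\<lambda>t. (norm (f + t *\<^sub>R h))\<^sup>2) has_real_derivative 2 * (f \<bullet> h)) (at 0)"
proof -
  have "(norm (f + t *\<^sub>R h))\<^sup>2 = (norm f)\<^sup>2 + 2 * t * (f \<bullet> h) + t\<^sup>2 * (norm h)\<^sup>2" for t
    unfolding power2_norm_eq_inner
    by (simp add: inner_add_right inner_commute power2_eq_square algebra_simps)
  then show ?thesis
    by (auto intro!: derivative_eq_intros)
qed

lemma norm_le_of_power2_le_inner:
  fixes h v :: "'a::real_inner"
  assumes lam: "lam > 0" and bound: "2 * lam * (norm h)\<^sup>2 \<le> a * (h \<bullet> v)"
  shows "norm h \<le> \<bar>a\<bar> * norm v / (2 * lam)"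
proof -
  have "norm h * (2 * lam * norm h) \<le> norm h * (\<bar>a\<bar> * norm v)"
  proof -
    have "a * (h \<bullet> v) \<le> \<bar>a\<bar> * \<bar>h \<bullet> v\<bar>"
      by (metis abs_ge_self abs_mult)
    also have "\<dots> \<le> \<bar>a\<bar> * (norm h * norm v)"
      by (simp add: Cauchy_Schwarz_ineq2 mult_left_mono)
    finally show ?thesis
      using bound by (simp add: power2_eq_square algebra_simps)
  qed
  then have "norm h = 0 \<or> 2 * lam * norm h \<le> \<bar>a\<bar> * norm v"
    by (auto dest: mult_left_le_imp_le)
  then show ?thesis
    using lam by (auto simp: field_simps)
qed

definition reg_risk_dir_deriv ::
  "(real \<Rightarrow> real \<Rightarrow> real) \<Rightarrow> ('x \<Rightarrow> 'h::real_inner) \<Rightarrow> real \<Rightarrow> nat \<Rightarrow>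
   (nat \<Rightarrow> 'x) \<Rightarrow> (nat \<Rightarrow> real) \<Rightarrow> 'x \<Rightarrow> real \<Rightarrow> 'h \<Rightarrow> 'h \<Rightarrow> real" where
  "reg_risk_dir_deriv loss \<Phi> lam n X Y Xnew y f h =
     (1 / real (n + 1)) * ((\<Sum>i<n. deriv (loss (Y i)) (rkhs_eval \<Phi> f (X i)) * rkhs_eval \<Phi> h (X i))
       + deriv (loss y) (rkhs_eval \<Phi> f Xnew) * rkhs_eval \<Phi> h Xnew)
     + lam * (2 * (f \<bullet> h))"

lemma DERIV_reg_risk_line:
  assumes "\<forall>i<n. \<forall>u. loss (Y i) differentiable (at u)" and "\<forall>u. loss y differentiable (at u)"
  shows "((\<lambda>t. reg_risk loss \<Phi> lam n X Y Xnew y (f + t *\<^sub>R h)) has_real_derivative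
           reg_risk_dir_deriv loss \<Phi> lam n X Y Xnew y f h) (at 0)"
  unfolding reg_risk_def reg_risk_dir_deriv_def rkhs_eval_add rkhs_eval_scaleR
  using assms
  by (intro DERIV_add DERIV_cmult DERIV_sum DERIV_comp_line DERIV_power2_norm_line) auto

lemma reg_minimizer_dir_deriv_eq_0:
  assumes "\<forall>i<n. \<forall>u. loss (Y i) differentiable (at u)" and "\<forall>u. loss y differentiable (at u)"
    and "is_reg_minimizer loss \<Phi> lam n X Y Xnew y f"
  shows "reg_risk_dir_deriv loss \<Phi> lam n X Y Xnew y f h = 0"
proof (rule DERIV_local_min[where d = 1])
  show "((\<lambda>t. reg_risk loss \<Phi> lam n X Y Xnew y (f + t *\<^sub>R h)) has_real_derivative
          reg_risk_dir_deriv loss \<Phi> lam n X Y Xnew y f h) (at 0)"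
    using assms(1,2) by (rule DERIV_reg_risk_line)
qed (use assms(3) in \<open>auto simp: is_reg_minimizer_def\<close>)

lemma reg_risk_dir_deriv_strongly_monotone:
  assumes "\<forall>i<n. convex_on UNIV (loss (Y i)) \<and> (\<forall>u. loss (Y i) differentiable (at u))"
    and "convex_on UNIV (loss y)" and "\<forall>u. loss y differentiable (at u)"
  shows "2 * lam * (norm (f - g))\<^sup>2 \<le>
           reg_risk_dir_deriv loss \<Phi> lam n X Y Xnew y f (f - g)
           - reg_risk_dir_deriv loss \<Phi> lam n X Y Xnew y g (f - g)"
proof -
  define m where "m L a b = (deriv L a - deriv L b) * (a - b)" for L :: "real \<Rightarrow> real" and a b
  let ?f = "rkhs_eval \<Phi> f" and ?g = "rkhs_eval \<Phi> g" and ?h = "rkhs_eval \<Phi> (f - g)"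
  define A where "A = (\<Sum>i<n. deriv (loss (Y i)) (?f (X i)) * ?h (X i))"
  define B where "B = (\<Sum>i<n. deriv (loss (Y i)) (?g (X i)) * ?h (X i))"
  have sum_m: "(\<Sum>i<n. m (loss (Y i)) (?f (X i)) (?g (X i))) = A - B"
    unfolding A_def B_def m_def by (simp add: sum_subtractf left_diff_distrib)
  have "reg_risk_dir_deriv loss \<Phi> lam n X Y Xnew y f (f - g)
          - reg_risk_dir_deriv loss \<Phi> lam n X Y Xnew y g (f - g)
        = (1 / real (n + 1)) * ((\<Sum>i<n. m (loss (Y i)) (?f (X i)) (?g (X i)))
            + m (loss y) (?f Xnew) (?g Xnew)) + 2 * lam * (norm (f - g))\<^sup>2"
    unfolding reg_risk_dir_deriv_def A_def[symmetric] B_def[symmetric] sum_m power2_norm_eq_inner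
    by (simp add: m_def inner_diff_left algebra_simps)
  moreover have "0 \<le> (\<Sum>i<n. m (loss (Y i)) (?f (X i)) (?g (X i))) + m (loss y) (?f Xnew) (?g Xnew)"
    unfolding m_def using assms by (intro add_nonneg_nonneg sum_nonneg convex_on_deriv_monotone) auto
  ultimately show ?thesis
    by simp
qed

lemma reg_risk_dir_deriv_change_label:
  "reg_risk_dir_deriv loss \<Phi> lam n X Y Xnew y f h - reg_risk_dir_deriv loss \<Phi> lam n X Y Xnew z f h
   = (deriv (loss y) (rkhs_eval \<Phi> f Xnew) - deriv (loss z) (rkhs_eval \<Phi> f Xnew))
     * rkhs_eval \<Phi> h Xnew / real (n + 1)"
  unfolding reg_risk_dir_deriv_def by (simp add: algebra_simps diff_divide_distrib add_divide_distrib)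

theorem proposition12:
  fixes loss :: "real \<Rightarrow> real \<Rightarrow> real"
    and \<Phi> :: "real ^ 'd \<Rightarrow> 'h::{real_inner,complete_space}"
    and \<X> :: "(real ^ 'd) set" and \<Y> :: "real set"
    and n :: nat and X :: "nat \<Rightarrow> real ^ 'd" and Y :: "nat \<Rightarrow> real" and Xnew :: "real ^ 'd"
    and y z lam :: real and fy fz :: 'h
  assumes rkhs: "is_rkhs_feature_map \<Phi>"
    and data: "\<forall>i<n. X i \<in> \<X> \<and> Y i \<in> \<Y>" and Xnew: "Xnew \<in> \<X>"
    and convex: "\<forall>v\<in>\<Y>. convex_on UNIV (loss v)"
    and smooth: "\<forall>v\<in>\<Y>. C2_real (loss v)"
    and y: "y \<in> \<Y>" and z: "z \<in> \<Y>" and lam_pos: "lam > 0"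
    and fy: "is_reg_minimizer loss \<Phi> lam n X Y Xnew y fy"
    and fz: "is_reg_minimizer loss \<Phi> lam n X Y Xnew z fz"
  shows "norm (fy - fz) \<le> sqrt (rkhs_kernel \<Phi> Xnew Xnew) *
           ((1/2) * \<bar>- deriv (loss z) (rkhs_eval \<Phi> fz Xnew) + deriv (loss y) (rkhs_eval \<Phi> fz Xnew)\<bar>)
           / (lam * real (n + 1))"
proof -
  let ?D = "reg_risk_dir_deriv loss \<Phi> lam n X Y Xnew" and ?h = "fy - fz"
  define d where "d = deriv (loss y) (rkhs_eval \<Phi> fz Xnew) - deriv (loss z) (rkhs_eval \<Phi> fz Xnew)"
  have diff: "\<forall>u. loss v differentiable (at u)" if "v \<in> \<Y>" for v
    using smooth that unfolding C2_real_def by blast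
  have data_diff: "\<forall>i<n. \<forall>u. loss (Y i) differentiable (at u)"
    using data diff by blast
  have "2 * lam * (norm ?h)\<^sup>2 \<le> ?D y fy ?h - ?D y fz ?h"
    using data convex diff y by (intro reg_risk_dir_deriv_strongly_monotone) auto
  also have "\<dots> = - (d / real (n + 1)) * (?h \<bullet> \<Phi> Xnew)"
    using reg_minimizer_dir_deriv_eq_0[OF data_diff diff[OF y] fy, of ?h]
      reg_minimizer_dir_deriv_eq_0[OF data_diff diff[OF z] fz, of ?h]
      reg_risk_dir_deriv_change_label[of loss \<Phi> lam n X Y Xnew y fz ?h z]
    by (simp add: d_def rkhs_eval_def)
  finally have "norm ?h \<le> \<bar>- (d / real (n + 1))\<bar> * norm (\<Phi> Xnew) / (2 * lam)"
    using lam_pos by (rule norm_le_of_power2_le_inner[rotated])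
  then show ?thesis
    by (simp add: sqrt_rkhs_kernel_diag d_def field_simps)
qed

end
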